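(* For every $\varepsilon_x,\varepsilon_y\in(-1,1)$, consider the coupled replicator dynamics of the two-person Rock-Scissors-Paper game described in the context, with its heteroclinic cycle $$C_4=\left[(\mathrm{S},\mathrm{R})\to(\mathrm{R},\mathrm{R})\to(\mathrm{P},\mathrm{R})\to(\mathrm{P},\mathrm{S})\to(\mathrm{S},\mathrm{S})\to(\mathrm{R},\mathrm{S})\to(\mathrm{R},\mathrm{P})\to(\mathrm{P},\mathrm{P})\to(\mathrm{S},\mathrm{P})\to(\mathrm{S},\mathrm{R})\right].$$ Then all stability indices of $C_4$ (at all points of its connecting trajectories) are $-\infty$, and $C_4$ is completely unstable.
   Context: Payoff matrices (rows/columns ordered R, S, P): $A=\begin{pmatrix}0&1-\varepsilon_x&-1-\varepsilon_x\\-1-\varepsilon_x&0&1-\varepsilon_x\\1-\varepsilon_x&-1-\varepsilon_x&0\end{pmatrix}$ and $B$ is the same matrix with $\varepsilon_x$ replaced by $\varepsilon_y$. Let $\Delta_X,\Delta_Y\subset\mathbb{R}^3$ be unit simplices and $\Delta=\Delta_X\times\Delta_Y$ with points $(x_1,x_2,x_3;y_1,y_2,y_3)$. The dynamics is $\dot x_i=x_i[(A\mathbf{y})_i-\mathbf{x}^TA\mathbf{y}]$, $\dot y_j=y_j[(B\mathbf{x})_j-\mathbf{y}^TB\mathbf{x}]$. The vertex $(a,b)$, $a,b\in\{\mathrm{R},\mathrm{S},\mathrm{P}\}$, is the equilibrium where $\mathbf{x}=e_1,e_2,e_3$ according as $a=\mathrm{R},\mathrm{S},\mathrm{P}$, and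 similarly $\mathbf{y}$ for $b$. An arrow $(a,b)\to(a',b')$ denotes the heteroclinic connection along the edge of $\Delta$ joining these vertices. For a compact invariant set $S$ with flow $\Phi_t$: $B_\epsilon(S)$ is its $\epsilon$-neighbourhood, $\mathcal{B}_\delta(S)=\{x:\Phi_t(x)\in B_\delta(S)\ \forall t\ge0,\ d(\Phi_t(x),S)\to0\}$, $\ell$ is Lebesgue measure in the appropriate dimension. The local stability index at $x\in S$ is $\sigma(x)=\sigma_+(x)-\sigma_-(x)$, where with $\Sigma_{\epsilon,\delta}(x)=\ell(B_\epsilon(x)\cap\mathcal{B}_\delta(S))/\ell(B_\epsilon(x))$, $\sigma_-(x)=\lim_{\delta\to0}\lim_{\epsilon\to0}\ln\Sigma_{\epsilon,\delta}(x)/\ln\epsilon$, $\sigma_+(x)=\lim_{\delta\to0}\lim_{\epsilon\to0}\ln(1-\Sigma_{\epsilon,\delta}(x))/\ln\epsilon$ (with $\sigma_-=\infty$ if $\Sigma_{\epsilon,\delta}=0$ for all small $\epsilon$, $\sigma_+=\infty$ if $\Sigma_{\epsilon,\delta}=1$ for all small $\epsilon$). $S$ is completely unstable if $\ell(\mathcal{B}_\delta(S))=0$ for some $\delta>0$. *)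

theory Defs
  imports "HOL-Analysis.Analysis"
begin

type_synonym state = "(real^3) \<times> (real^3)"

abbreviation R :: 3 where "R \<equiv> 1"
abbreviation S :: 3 where "S \<equiv> 2"
abbreviation P :: 3 where "P \<equiv> 3"

definition rsp_matrix :: "real \<Rightarrow> real^3^3" where
  "rsp_matrix e = vector [vector [0, 1 - e, -1 - e],
                          vector [-1 - e, 0, 1 - e],
                          vector [1 - e, -1 - e, 0]]"

definition repl_field :: "real \<Rightarrow> real \<Rightarrow> state \<Rightarrow> state" where
  "repl_field ex ey z =
     (let x = fst z; y = snd z; A = rsp_matrix ex; B = rsp_matrix ey in
      ((\<chi> i. x$i * ((A *v y)$i - x \<bullet> (A *v y))),
       (\<chi> j. y$j * ((B *v x)$j - y \<bullet> (B *v x)))))"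

definition simplex3 :: "(real^3) set" where
  "simplex3 = {x. (\<forall>i. 0 \<le> x$i) \<and> (\<Sum>i\<in>UNIV. x$i) = 1}"

definition Delta :: "state set" where
  "Delta = simplex3 \<times> simplex3"

definition is_traj :: "real \<Rightarrow> real \<Rightarrow> (real \<Rightarrow> state) \<Rightarrow> bool" where
  "is_traj ex ey \<phi> \<longleftrightarrow>
     (\<forall>t\<ge>0. (\<phi> has_vector_derivative repl_field ex ey (\<phi> t)) (at t within {0..}))"

definition nbhd :: "state set \<Rightarrow> real \<Rightarrow> state set" where
  "nbhd A d = {z. infdist z A < d}"

definition basin :: "real \<Rightarrow> real \<Rightarrow> state set \<Rightarrow> real \<Rightarrow> state set" where
  "basin ex ey A d = {p \<in> Delta. \<exists>\<phi>. \<phi> 0 = p \<and> is_traj ex ey \<phi> \<and>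
        (\<forall>t\<ge>0. \<phi> t \<in> nbhd A d) \<and> ((\<lambda>t. infdist (\<phi> t) A) \<longlongrightarrow> 0) at_top}"

text \<open>Affine chart of Delta by (x1,x2,y1,y2); 4-dimensional Lebesgue measure on Delta is
  (up to a constant factor) Lebesgue measure of the preimage under this chart.\<close>
definition chart :: "real \<times> real \<times> real \<times> real \<Rightarrow> state" where
  "chart u = (case u of (a, b, c, d) \<Rightarrow>
      (vector [a, b, 1 - a - b], vector [c, d, 1 - c - d]))"

definition ell :: "state set \<Rightarrow> real" where
  "ell A = measure lebesgue (chart -` (A \<inter> Delta))"

definition ell_null :: "state set \<Rightarrow> bool" where
  "ell_null A \<longleftrightarrow> chart -` (A \<inter> Delta) \<in> null_sets lebesgue"

definition Sigma_ratio :: "real \<Rightarrow> real \<Rightarrow> state set \<Rightarrow> state \<Rightarrow> real \<Rightarrow> real \<Rightarrow> real" where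
  "Sigma_ratio ex ey A x \<epsilon> d = ell (ball x \<epsilon> \<inter> basin ex ey A d) / ell (ball x \<epsilon>)"

text \<open>Iterated limit lim_{d->0} lim_{e->0} ln(f e d)/ln e equals s, with the convention that
  the inner limit is infinity if f e d = 0 for all small e.\<close>
definition iter_index_is :: "(real \<Rightarrow> real \<Rightarrow> real) \<Rightarrow> ereal \<Rightarrow> bool" where
  "iter_index_is f s \<longleftrightarrow>
     (\<exists>g :: real \<Rightarrow> ereal.
        (\<forall>\<^sub>F d in at_right 0.
           (if (\<forall>\<^sub>F e in at_right 0. f e d = 0) then g d = \<infinity>
            else ((\<lambda>e. ereal (ln (f e d) / ln e)) \<longlongrightarrow> g d) (at_right 0)))
        \<and> (g \<longlongrightarrow> s) (at_right 0))"

definition sigma_minus_is :: "real \<Rightarrow> real \<Rightarrow> state set \<Rightarrow> state \<Rightarrow> ereal \<Rightarrow> bool" where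
  "sigma_minus_is ex ey A x s \<longleftrightarrow> iter_index_is (\<lambda>e d. Sigma_ratio ex ey A x e d) s"

definition sigma_plus_is :: "real \<Rightarrow> real \<Rightarrow> state set \<Rightarrow> state \<Rightarrow> ereal \<Rightarrow> bool" where
  "sigma_plus_is ex ey A x s \<longleftrightarrow> iter_index_is (\<lambda>e d. 1 - Sigma_ratio ex ey A x e d) s"

definition stability_index_is :: "real \<Rightarrow> real \<Rightarrow> state set \<Rightarrow> state \<Rightarrow> ereal \<Rightarrow> bool" where
  "stability_index_is ex ey A x s \<longleftrightarrow>
     (\<exists>sp sm. sigma_plus_is ex ey A x sp \<and> sigma_minus_is ex ey A x sm \<and> s = sp - sm)"

definition completely_unstable :: "real \<Rightarrow> real \<Rightarrow> state set \<Rightarrow> bool" where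
  "completely_unstable ex ey A \<longleftrightarrow> (\<exists>d>0. ell_null (basin ex ey A d))"

definition vtx :: "3 \<Rightarrow> 3 \<Rightarrow> state" where
  "vtx a b = (axis a 1, axis b 1)"

definition C4_vertices :: "(3 \<times> 3) list" where
  "C4_vertices = [(S,R), (R,R), (P,R), (P,S), (S,S), (R,S), (R,P), (P,P), (S,P)]"

definition C4_edges :: "(state \<times> state) set" where
  "C4_edges = {(vtx (fst (C4_vertices ! k)) (snd (C4_vertices ! k)),
                vtx (fst (C4_vertices ! ((k + 1) mod 9))) (snd (C4_vertices ! ((k + 1) mod 9))))
               | k. k < 9}"

text \<open>The cycle as a set: its equilibria together with its connecting trajectories (the edges).\<close>
definition C4 :: "state set" where
  "C4 = (\<Union>(v, w)\<in>C4_edges. closed_segment v w)"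

definition C4_connections :: "state set" where
  "C4_connections = (\<Union>(v, w)\<in>C4_edges. open_segment v w)"

end

theory Submission
  imports Defs
begin

text \<open>
  Along an interior orbit that stays \<open>\<delta>\<close>-close to \<open>C\<^sub>4\<close>, the coordinates vanishing on the
  nearby edge stay small, and every log-ratio \<open>ln (x\<^sub>i / x\<^sub>j)\<close>, \<open>ln (y\<^sub>i / y\<^sub>j)\<close> moves with the
  corresponding payoff difference. Lyapunov functions built from these ratios show that \<open>y\<close>
  can neither settle near a vertex nor stay away from all of them, so \<open>y\<close> switches infinitely
  often, each switch from \<open>b\<close> to \<open>b + 1\<close> happening while \<open>x\<close> sits near \<open>b - 1\<close>. To follow
  \<open>C\<^sub>4\<close>, \<open>x\<close> has to arrive at \<open>b - 1\<close> from \<open>b\<close> and leave it towards \<open>b + 1\<close>; but while \<open>y\<close> is on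
  the face \<open>y\<^sub>b\<^sub>-\<^sub>1 \<approx> 0\<close>, strategy \<open>b\<close> earns at least as much as \<open>b + 1\<close>, so \<open>x\<^sub>b / x\<^sub>b\<^sub>+\<^sub>1\<close> cannot
  decrease. Hence the local basins of \<open>C\<^sub>4\<close> contain only boundary points of \<open>\<Delta>\<close>; they are
  null sets, which makes \<open>\<sigma>\<^sub>- = \<infinity>\<close> and \<open>\<sigma>\<^sub>+ = 0\<close> at every point.
\<close>

section \<open>Scalar differential inequalities\<close>

lemma increment_ge_of_deriv_ge:
  fixes f f' :: "real \<Rightarrow> real"
  assumes "a \<le> b" "continuous_on {a..b} f"
    and "\<And>t. a < t \<Longrightarrow> t < b \<Longrightarrow> (f has_real_derivative f' t) (at t)"
    and "\<And>t. a < t \<Longrightarrow> t < b \<Longrightarrow> f' t \<ge> c"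
  shows "f b - f a \<ge> c * (b - a)"
proof -
  have "(\<lambda>t. f t - c * t) a \<le> (\<lambda>t. f t - c * t) b"
  proof (rule DERIV_nonneg_imp_increasing_open[OF assms(1)])
    fix t assume "a < t" "t < b"
    show "\<exists>y. ((\<lambda>t. f t - c * t) has_real_derivative y) (at t) \<and> 0 \<le> y"
      using assms(3,4)[OF \<open>a < t\<close> \<open>t < b\<close>]
      by (intro exI[of _ "f' t - c"]) (auto intro!: derivative_eq_intros)
  qed (use assms(2) in \<open>auto intro!: continuous_intros\<close>)
  then show ?thesis by (simp add: algebra_simps)
qed

lemma uniform_growth_contradicts_upper_bound:
  fixes f f' :: "real \<Rightarrow> real"
  assumes "continuous_on {T..} f" "c > 0"
    and "\<And>t. T < t \<Longrightarrow> (f has_real_derivative f' t) (at t)"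
    and "\<And>t. T < t \<Longrightarrow> f' t \<ge> c"
    and "\<And>t. T \<le> t \<Longrightarrow> f t \<le> M"
  shows False
proof -
  define b where "b = T + (M - f T + 1) / c + 1"
  have "M - f T \<ge> 0" using assms(5)[of T] by simp
  then have "T \<le> b" using assms(2) unfolding b_def by simp
  have "f b - f T \<ge> c * (b - T)"
    by (rule increment_ge_of_deriv_ge[OF \<open>T \<le> b\<close> continuous_on_subset[OF assms(1)]])
      (use assms in auto)
  moreover have "c * (b - T) = M - f T + 1 + c"
    unfolding b_def using assms(2) by (simp add: field_simps)
  ultimately show False using assms(2,5) \<open>T \<le> b\<close> by force
qed

lemma last_crossing:
  fixes f :: "real \<Rightarrow> real"
  assumes "a \<le> b" "continuous_on {a..b} f" "f a \<le> v" "v < f b"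
  obtains t1 where "a \<le> t1" "t1 < b" "f t1 = v" "\<And>t. t1 < t \<Longrightarrow> t \<le> b \<Longrightarrow> f t > v"
proof -
  let ?K = "{a..b} \<inter> f -` {..v}"
  have "closed ?K" using assms(2) by (intro continuous_closed_preimage) auto
  then have "compact ?K" by (simp add: compact_eq_bounded_closed bounded_Int)
  moreover have "a \<in> ?K" using assms by auto
  ultimately obtain t1 where t1: "t1 \<in> ?K" "\<forall>t\<in>?K. t \<le> t1"
    using compact_attains_sup by blast
  have above: "f t > v" if "t1 < t" "t \<le> b" for t
  proof -
    have "t \<in> {a..b}" using t1 that by auto
    with t1(2) that show ?thesis by force
  qed
  have "t1 < b" using t1 assms(4) by (cases "t1 = b") auto
  moreover have "f t1 = v"
  proof (rule ccontr)
    assume "f t1 \<noteq> v"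
    then have "f t1 < v" using t1 by auto
    moreover have "continuous_on {t1..b} f" using assms(2) t1 by (auto intro: continuous_on_subset)
    ultimately obtain s where "t1 \<le> s" "s \<le> b" "f s = v"
      using IVT'[of f t1 v b] assms(4) \<open>t1 < b\<close> by auto
    then show False using above[of s] \<open>f t1 < v\<close> by (cases "s = t1") auto
  qed
  ultimately show thesis using that t1 above by auto
qed

lemma first_crossing:
  fixes f :: "real \<Rightarrow> real"
  assumes "a \<le> b" "continuous_on {a..b} f" "f b \<le> v" "v < f a"
  obtains t2 where "a < t2" "t2 \<le> b" "f t2 = v" "\<And>t. a \<le> t \<Longrightarrow> t < t2 \<Longrightarrow> f t > v"
proof -
  have "continuous_on {-b..-a} (\<lambda>s. f (- s))"
    by (intro continuous_on_compose2[OF assms(2)]) (auto intro!: continuous_intros)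
  then obtain t1 where "-b \<le> t1" "t1 < -a" "f (-t1) = v" "\<And>t. t1 < t \<Longrightarrow> t \<le> -a \<Longrightarrow> f (- t) > v"
    using last_crossing[of "-b" "-a" "\<lambda>s. f (- s)" v] assms by auto
  then show thesis using that[of "-t1"] by (metis minus_less_iff minus_minus neg_le_iff_le)
qed

lemma no_crossing_same_side:
  fixes f :: "real \<Rightarrow> real"
  assumes "a \<le> b" "continuous_on {a..b} f" "\<And>t. a \<le> t \<Longrightarrow> t \<le> b \<Longrightarrow> f t \<noteq> v"
  shows "f a < v \<longleftrightarrow> f b < v"
proof
  assume "f a < v"
  then show "f b < v" using IVT'[of f a v b] assms by force
next
  assume "f b < v"
  then show "f a < v" using IVT2'[of f b v a] assms by force
qed

lemma linear_ode_solution: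
  fixes f g :: "real \<Rightarrow> real"
  assumes df: "\<And>t. t \<ge> 0 \<Longrightarrow> (f has_real_derivative f t * g t) (at t within {0..})"
    and cg: "continuous_on {0..} g" and T: "T \<ge> 0"
  shows "f T = f 0 * exp (integral {0..T} g)"
proof -
  define G where "G t = integral {0..t} g" for t
  have cgT: "continuous_on {0..T} g" by (rule continuous_on_subset[OF cg]) auto
  have "((\<lambda>t. f t * exp (- G t)) has_real_derivative 0) (at t within {0..T})" if t: "t \<in> {0..T}" for t
  proof -
    have "(G has_real_derivative g t) (at t within {0..T})"
      unfolding G_def has_real_derivative_iff_has_vector_derivative
      by (rule integral_has_vector_derivative[OF cgT t])
    moreover have "(f has_real_derivative f t * g t) (at t within {0..T})"
      by (rule DERIV_subset[OF df]) (use t in auto)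
    ultimately show ?thesis
      by (auto intro!: derivative_eq_intros simp: algebra_simps)
  qed
  then obtain c where "\<forall>t\<in>{0..T}. f t * exp (- G t) = c"
    using has_field_derivative_zero_constant[OF convex_real_interval(5)] by blast
  then have "f T * exp (- G T) = f 0 * exp (- G 0)" using T by auto
  then show ?thesis unfolding G_def by (simp add: exp_minus field_simps)
qed

lemma succ_pred_neq_3:
  fixes b :: 3
  shows "b + 1 \<noteq> b" "b - 1 \<noteq> b" "b + 1 \<noteq> b - 1" "b \<noteq> b + 1" "b \<noteq> b - 1" "b - 1 \<noteq> b + 1"
    and succ_pred_3: "b + 1 + 1 = b - 1" "b - 1 - 1 = b + 1" "b + 1 - 1 = b" "b - 1 + 1 = b"
  using exhaust_3[of b] by auto

lemma cases_3: fixes b j :: 3 shows "j = b \<or> j = b + 1 \<or> j = b - 1"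
  using exhaust_3[of b] exhaust_3[of j] by auto

lemma sum_3_from: fixes f :: "3 \<Rightarrow> real" shows "(\<Sum>k\<in>UNIV. f k) = f b + f (b + 1) + f (b - 1)"
proof -
  have "UNIV = {b, b + 1, b - 1}" using cases_3[of _ b] by auto
  then have "(\<Sum>k\<in>UNIV. f k) = (\<Sum>k\<in>{b, b + 1, b - 1}. f k)" by metis
  then show ?thesis using succ_pred_neq_3[of b] by (simp add: add.assoc)
qed

definition rsp_payoff :: "real \<Rightarrow> (3 \<Rightarrow> real) \<Rightarrow> 3 \<Rightarrow> real" where
  "rsp_payoff e v i = (1 - e) * v (i + 1) - (1 + e) * v (i - 1)"

definition relative_payoff :: "real \<Rightarrow> (3 \<Rightarrow> real) \<Rightarrow> (3 \<Rightarrow> real) \<Rightarrow> 3 \<Rightarrow> real" where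
  "relative_payoff e v u i = rsp_payoff e v i - (\<Sum>k\<in>UNIV. u k * rsp_payoff e v k)"

lemma rsp_payoff_cyclic:
  "rsp_payoff e v b = (1 - e) * v (b + 1) - (1 + e) * v (b - 1)"
  "rsp_payoff e v (b + 1) = (1 - e) * v (b - 1) - (1 + e) * v b"
  "rsp_payoff e v (b - 1) = (1 - e) * v b - (1 + e) * v (b + 1)"
  unfolding rsp_payoff_def succ_pred_3 by simp_all

lemma rsp_payoff_diff:
  "rsp_payoff e v (b + 1) - rsp_payoff e v b = 2 * v (b - 1) - (1 + e) * v b - (1 - e) * v (b + 1)"
  "rsp_payoff e v b - rsp_payoff e v (b - 1) = 2 * v (b + 1) - (1 - e) * v b - (1 + e) * v (b - 1)"
  "rsp_payoff e v b - rsp_payoff e v (b + 1) = (1 + e) * v b + (1 - e) * v (b + 1) - 2 * v (b - 1)"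
  unfolding rsp_payoff_def succ_pred_3 by (simp_all add: algebra_simps)

lemma rsp_matrix_mult_nth: "(rsp_matrix e *v v) $ i = rsp_payoff e (($) v) i"
proof -
  have succ_pred: "(1::3) + 1 = 2" "(2::3) + 1 = 3" "(3::3) + 1 = 1"
    "(1::3) - 1 = 3" "(2::3) - 1 = 1" "(3::3) - 1 = 2" by simp_all
  show ?thesis using exhaust_3[of i]
    by (elim disjE; simp only: rsp_payoff_def succ_pred;
        simp add: rsp_matrix_def matrix_vector_mult_def sum_3 algebra_simps)
qed

section \<open>Replicator trajectories\<close>

lemma repl_field_fst_nth:
  "fst (repl_field ex ey z) $ i = fst z $ i * relative_payoff ex (($) (snd z)) (($) (fst z)) i"
  by (simp add: repl_field_def Let_def relative_payoff_def rsp_matrix_mult_nth inner_vec_def)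

lemma repl_field_swap: "repl_field ey ex (prod.swap z) = prod.swap (repl_field ex ey z)"
  by (simp add: repl_field_def Let_def)

lemma is_traj_swap:
  assumes "is_traj ex ey \<phi>"
  shows "is_traj ey ex (prod.swap \<circ> \<phi>)"
proof -
  have "bounded_linear (prod.swap :: state \<Rightarrow> _)"
    by (rule bounded_linear_intro[of _ 1]) (auto simp: norm_Pair add.commute)
  then show ?thesis
    using assms unfolding is_traj_def comp_def repl_field_swap
    by (auto intro: bounded_linear.has_vector_derivative)
qed

lemma is_traj_continuous: "is_traj ex ey \<phi> \<Longrightarrow> continuous_on {0..} \<phi>"
  unfolding is_traj_def continuous_on_eq_continuous_within
  by (auto intro: has_vector_derivative_continuous)

lemma is_traj_fst_nth_deriv:
  assumes "is_traj ex ey \<phi>" "t \<ge> 0"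
  shows "((\<lambda>s. fst (\<phi> s) $ i) has_real_derivative
           fst (\<phi> t) $ i * relative_payoff ex (($) (snd (\<phi> t))) (($) (fst (\<phi> t))) i)
         (at t within {0..})"
proof -
  have "((\<lambda>s. fst (\<phi> s) $ i) has_vector_derivative fst (repl_field ex ey (\<phi> t)) $ i) (at t within {0..})"
    using assms unfolding is_traj_def
    by (intro bounded_linear.has_vector_derivative[of "\<lambda>z. fst z $ i"]
        bounded_linear_compose[OF bounded_linear_vec_nth bounded_linear_fst]) auto
  then show ?thesis
    unfolding has_real_derivative_iff_has_vector_derivative repl_field_fst_nth .
qed

lemma relative_payoff_continuous:
  assumes "is_traj ex ey \<phi>"
  shows "continuous_on {0..} (\<lambda>t. relative_payoff e (($) (snd (\<phi> t))) (($) (fst (\<phi> t))) i)"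
  using is_traj_continuous[OF assms]
  unfolding relative_payoff_def rsp_payoff_def by (intro continuous_intros)

lemma is_traj_fst_pos:
  assumes "is_traj ex ey \<phi>" "fst (\<phi> 0) $ i > 0" "T \<ge> 0"
  shows "fst (\<phi> T) $ i > 0"
proof -
  have "fst (\<phi> T) $ i = fst (\<phi> 0) $ i *
      exp (integral {0..T} (\<lambda>t. relative_payoff ex (($) (snd (\<phi> t))) (($) (fst (\<phi> t))) i))"
    by (rule linear_ode_solution[OF is_traj_fst_nth_deriv[OF assms(1)]
          relative_payoff_continuous[OF assms(1)] assms(3)])
  then show ?thesis using assms(2) by simp
qed

lemma sum_mult_relative_payoff:
  "(\<Sum>i\<in>UNIV. u i * relative_payoff e v u i) = (1 - sum u UNIV) * (\<Sum>k\<in>UNIV. u k * rsp_payoff e v k)"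
  unfolding relative_payoff_def
  by (simp add: right_diff_distrib sum_subtractf sum_distrib_right[symmetric] algebra_simps)

text \<open>The defect \<open>1 - \<Sum>i. x\<^sub>i\<close> solves a linear equation, hence vanishes for all time once it does at \<open>0\<close>.\<close>
lemma is_traj_fst_sum:
  assumes "is_traj ex ey \<phi>" "(\<Sum>i\<in>UNIV. fst (\<phi> 0) $ i) = 1" "T \<ge> 0"
  shows "(\<Sum>i\<in>UNIV. fst (\<phi> T) $ i) = 1"
proof -
  let ?g = "\<lambda>t. - (\<Sum>k\<in>UNIV. fst (\<phi> t) $ k * rsp_payoff ex (($) (snd (\<phi> t))) k)"
  have "1 - (\<Sum>i\<in>UNIV. fst (\<phi> T) $ i) = (1 - (\<Sum>i\<in>UNIV. fst (\<phi> 0) $ i)) * exp (integral {0..T} ?g)"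
  proof (rule linear_ode_solution[OF _ _ assms(3), where f = "\<lambda>t. 1 - (\<Sum>i\<in>UNIV. fst (\<phi> t) $ i)"])
    fix t :: real assume "t \<ge> 0"
    have "((\<lambda>t. \<Sum>i\<in>UNIV. fst (\<phi> t) $ i) has_real_derivative
       (\<Sum>i\<in>UNIV. fst (\<phi> t) $ i * relative_payoff ex (($) (snd (\<phi> t))) (($) (fst (\<phi> t))) i))
       (at t within {0..})"
      by (intro DERIV_sum is_traj_fst_nth_deriv[OF assms(1) \<open>t \<ge> 0\<close>])
    from DERIV_diff[OF DERIV_const[of 1] this]
    show "((\<lambda>t. 1 - (\<Sum>i\<in>UNIV. fst (\<phi> t) $ i)) has_real_derivative
       (1 - (\<Sum>i\<in>UNIV. fst (\<phi> t) $ i)) * ?g t) (at t within {0..})"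
      unfolding sum_mult_relative_payoff by simp
  next
    show "continuous_on {0..} ?g" unfolding rsp_payoff_def
      using is_traj_continuous[OF assms(1)] by (intro continuous_intros)
  qed
  then show ?thesis using assms(2) by simp
qed

lemma is_traj_ln_fst_deriv:
  assumes "is_traj ex ey \<phi>" "fst (\<phi> t) $ i > 0" "t > 0"
  shows "((\<lambda>s. ln (fst (\<phi> s) $ i)) has_real_derivative
           relative_payoff ex (($) (snd (\<phi> t))) (($) (fst (\<phi> t))) i) (at t)"
proof -
  have "at t within {0..} = at t"
    by (rule at_within_open_subset[of t "{0<..}"]) (use assms(3) in auto)
  then have "((\<lambda>s. fst (\<phi> s) $ i) has_real_derivative
      fst (\<phi> t) $ i * relative_payoff ex (($) (snd (\<phi> t))) (($) (fst (\<phi> t))) i) (at t)"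
    using is_traj_fst_nth_deriv[OF assms(1), of t i] assms(3) by simp
  note chain = DERIV_chain2[OF DERIV_ln[OF assms(2)] this]
  have cancel: "inverse (fst (\<phi> t) $ i) * (fst (\<phi> t) $ i * r) = r" for r
    using assms(2) by simp
  show ?thesis using chain unfolding cancel .
qed

lemma is_traj_snd_pos:
  "is_traj ex ey \<phi> \<Longrightarrow> snd (\<phi> 0) $ i > 0 \<Longrightarrow> T \<ge> 0 \<Longrightarrow> snd (\<phi> T) $ i > 0"
  using is_traj_fst_pos[OF is_traj_swap] by fastforce

lemma is_traj_snd_sum:
  "is_traj ex ey \<phi> \<Longrightarrow> (\<Sum>i\<in>UNIV. snd (\<phi> 0) $ i) = 1 \<Longrightarrow> T \<ge> 0 \<Longrightarrow> (\<Sum>i\<in>UNIV. snd (\<phi> T) $ i) = 1"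
  using is_traj_fst_sum[OF is_traj_swap] by fastforce

lemma is_traj_ln_snd_deriv:
  "is_traj ex ey \<phi> \<Longrightarrow> snd (\<phi> t) $ i > 0 \<Longrightarrow> t > 0 \<Longrightarrow>
   ((\<lambda>s. ln (snd (\<phi> s) $ i)) has_real_derivative
      relative_payoff ey (($) (fst (\<phi> t))) (($) (snd (\<phi> t))) i) (at t)"
  using is_traj_ln_fst_deriv[OF is_traj_swap, of ex ey \<phi> t i] by (simp add: comp_def)

lemma vtx_eq_iff: "vtx a b = vtx a' b' \<longleftrightarrow> a = a' \<and> b = b'"
  by (auto simp: vtx_def axis_eq_axis)

lemma vtx_nth: "fst (vtx a b) $ i = (if i = a then 1 else 0)" "snd (vtx a b) $ i = (if i = b then 1 else 0)"
  unfolding vtx_def by (auto simp: axis_def)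

lemma C4_edges_cases:
  assumes "(v, w) \<in> C4_edges"
  obtains b where "(v, w) = (vtx (b + 1) b, vtx b b)" | b where "(v, w) = (vtx b b, vtx (b - 1) b)"
    | b where "(v, w) = (vtx (b - 1) b, vtx (b - 1) (b + 1))"
proof -
  from assms obtain k where k: "k < 9"
    "(v, w) = (vtx (fst (C4_vertices ! k)) (snd (C4_vertices ! k)),
      vtx (fst (C4_vertices ! ((k + 1) mod 9))) (snd (C4_vertices ! ((k + 1) mod 9))))"
    unfolding C4_edges_def by blast
  have "k \<in> {0, 1, 2, 3, 4, 5, 6, 7, 8}" using k(1) by auto
  \<comment> \<open>in each case \<open>b\<close> is the \<open>y\<close>-vertex of the initial point of the edge\<close>
  then show thesis
    using that[of "snd (C4_vertices ! k)"] k(2) by (auto simp: C4_vertices_def vtx_eq_iff)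
qed

text \<open>The three disjuncts are the \<open>d\<close>-neighbourhoods, measured in the coordinates that vanish there,
  of the edges \<open>(b+1,b) \<rightarrow> (b,b)\<close>, \<open>(b,b) \<rightarrow> (b-1,b)\<close> and \<open>(b-1,b) \<rightarrow> (b-1,b+1)\<close> of \<open>C\<^sub>4\<close>.\<close>
definition near_C4_edge :: "real \<Rightarrow> (3 \<Rightarrow> real) \<Rightarrow> (3 \<Rightarrow> real) \<Rightarrow> 3 \<Rightarrow> bool" where
  "near_C4_edge d x y b \<longleftrightarrow>
     (x (b - 1) < d \<and> y (b + 1) < d \<and> y (b - 1) < d) \<or>
     (x (b + 1) < d \<and> y (b + 1) < d \<and> y (b - 1) < d) \<or>
     (x b < d \<and> x (b + 1) < d \<and> y (b - 1) < d)"

text \<open>Near the midpoint of the edge \<open>(b-1,b) \<rightarrow> (b-1,b+1)\<close>, where \<open>y\<close> switches from \<open>b\<close> to \<open>b + 1\<close>.\<close>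
definition near_switch :: "real \<Rightarrow> (3 \<Rightarrow> real) \<Rightarrow> (3 \<Rightarrow> real) \<Rightarrow> 3 \<Rightarrow> bool" where
  "near_switch d x y b \<longleftrightarrow> x b < d \<and> x (b + 1) < d \<and> y (b - 1) < d \<and>
     \<bar>y b - 1/2\<bar> \<le> d \<and> \<bar>y (b + 1) - 1/2\<bar> \<le> d"

lemma C4_nonempty: "C4 \<noteq> {}"
proof -
  have "(vtx S R, vtx R R) \<in> C4_edges"
    unfolding C4_edges_def C4_vertices_def by (rule CollectI, rule exI[of _ 0]) simp
  then show ?thesis unfolding C4_def by fastforce
qed

lemma near_C4_imp_near_edge:
  assumes "infdist z C4 < d"
  obtains b where "near_C4_edge d (($) (fst z)) (($) (snd z)) b"
proof -
  have "(INF a\<in>C4. dist z a) < d" using assms infdist_notempty[OF C4_nonempty] by simp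
  then obtain w where w: "w \<in> C4" "dist z w < d"
    using cINF_less_iff[OF C4_nonempty, of "dist z" d] by (auto intro: bdd_belowI2[of _ 0])
  then obtain v v' where vv: "(v, v') \<in> C4_edges" "w \<in> closed_segment v v'"
    unfolding C4_def by auto
  have small_fst: "fst z $ i < d" if "fst v $ i = 0" "fst v' $ i = 0" for i
  proof -
    have "fst w $ i = 0" using vv(2) that by (auto simp: closed_segment_def)
    moreover have "dist (fst z $ i) (fst w $ i) \<le> dist z w"
      using dist_vec_nth_le dist_fst_le order_trans by blast
    ultimately show ?thesis using w(2) by (simp add: dist_real_def)
  qed
  have small_snd: "snd z $ i < d" if "snd v $ i = 0" "snd v' $ i = 0" for i
  proof -
    have "snd w $ i = 0" using vv(2) that by (auto simp: closed_segment_def)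
    moreover have "dist (snd z $ i) (snd w $ i) \<le> dist z w"
      using dist_vec_nth_le dist_snd_le order_trans by blast
    ultimately show ?thesis using w(2) by (simp add: dist_real_def)
  qed
  from vv(1) show thesis
  proof (cases rule: C4_edges_cases)
    case (1 b)
    then show thesis using that[of b] small_fst small_snd succ_pred_neq_3[of b]
      unfolding near_C4_edge_def by (simp add: vtx_nth)
  next
    case (2 b)
    then show thesis using that[of b] small_fst small_snd succ_pred_neq_3[of b]
      unfolding near_C4_edge_def by (simp add: vtx_nth)
  next
    case (3 b)
    then show thesis using that[of b] small_fst small_snd succ_pred_neq_3[of b]
      unfolding near_C4_edge_def by (simp add: vtx_nth)
  qed
qed

text \<open>In the next three lemmas \<open>xb, xp, xm\<close> stand for \<open>x\<^sub>b, x\<^sub>b\<^sub>+\<^sub>1, x\<^sub>b\<^sub>-\<^sub>1\<close> (likewise for \<open>y\<close>), and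
  the left-hand side is the rate of the Lyapunov function of \<open>lyapunov_rate_ge\<close>, one lemma for each
  edge of \<open>C\<^sub>4\<close> along which \<open>y\<^sub>b > 1/2\<close> is possible.\<close>
lemma lyapunov_rate_near_y_vertex:
  fixes ex ey m d xb xp xm yb yp ym :: real
  assumes margin: "0 < m" "m \<le> 1 - \<bar>ex\<bar>" "m \<le> 1 - \<bar>ey\<bar>" and small: "0 < d" "d \<le> m / 64"
  and pos: "0 < xb" "0 < xp" "0 < xm" "0 < yb" "0 < yp" "0 < ym"
  and simplex: "xb + xp + xm = 1" "yb + yp + ym = 1"
  and close: "yp < d" "ym < d"
  shows "xp*(2*yb - (1+ex)*yp - (1-ex)*ym) + xb*((1-ex)*yb - 2*yp + (1+ex)*ym)
        + (m/8)*(2*xm - (1+ey)*xb - (1-ey)*xp) \<ge> m/8"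
proof -
  have params: "-1 < ex" "ex < 1" "-1 < ey" "ey < 1" "m \<le> 1 - ex" "m \<le> 1 + ex" using margin by auto
  have factor_xp: "2*yb - (1+ex)*yp - (1-ex)*ym \<ge> 2 - 8*d"
  proof -
    have "(1+ex)*yp \<le> 2*d" by (rule mult_mono) (use params close pos in auto)
    moreover have "(1-ex)*ym \<le> 2*d" by (rule mult_mono) (use params close pos in auto)
    ultimately show ?thesis using simplex close by linarith
  qed
  have factor_xb: "(1-ex)*yb - 2*yp + (1+ex)*ym \<ge> m - 4*d"
  proof -
    have "m*(1 - 2*d) \<le> (1-ex)*yb" by (rule mult_mono) (use params close pos simplex small in auto)
    moreover have "(1+ex)*ym \<ge> 0" using params pos by simp
    moreover have "m * d \<le> d" using margin small params by simp
    ultimately show ?thesis using close by (simp add: algebra_simps)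
  qed
  have factor_y: "2*xm - (1+ey)*xb - (1-ey)*xp \<ge> 2*xm - 2*xb - 2*xp"
  proof -
    have "(1+ey)*xb \<le> 2*xb" by (rule mult_right_mono) (use params pos in auto)
    moreover have "(1-ey)*xp \<le> 2*xp" by (rule mult_right_mono) (use params pos in auto)
    ultimately show ?thesis by linarith
  qed
  have term_xp: "xp*(2*yb - (1+ex)*yp - (1-ex)*ym) \<ge> xp*(2 - 8*d)"
    by (rule mult_left_mono[OF factor_xp]) (use pos in simp)
  have term_xb: "xb*((1-ex)*yb - 2*yp + (1+ex)*ym) \<ge> xb*(m - 4*d)"
    by (rule mult_left_mono[OF factor_xb]) (use pos in simp)
  have term_y: "(m/8)*(2*xm - (1+ey)*xb - (1-ey)*xp) \<ge> (m/8)*(2*xm - 2*xb - 2*xp)"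
    by (rule mult_left_mono[OF factor_y]) (use margin in simp)
  have term_xp_ge: "xp*(2 - 8*d) \<ge> xp * (m/2)" by (rule mult_left_mono) (use small margin pos params in auto)
  have term_xb_ge: "xb*(m - 4*d) \<ge> xb * (m/2)" by (rule mult_left_mono) (use small margin pos params in auto)
  have "xp * (m/2) + xb * (m/2) + (m/8)*(2*xm - 2*xb - 2*xp) = (m/4) * (xm + xb + xp)"
    by (simp add: algebra_simps)
  also have "\<dots> = m/4" using simplex by simp
  finally show ?thesis using term_xp term_xb term_y term_xp_ge term_xb_ge margin by linarith
qed

lemma lyapunov_rate_near_x_best_reply:
  fixes ex ey m d xb xp xm yb yp ym :: real
  assumes margin: "0 < m" "m \<le> 1 - \<bar>ex\<bar>" "m \<le> 1 - \<bar>ey\<bar>" and small: "0 < d" "d \<le> m / 64"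
  and pos: "0 < xb" "0 < xp" "0 < xm" "0 < yb" "0 < yp" "0 < ym"
  and simplex: "xb + xp + xm = 1" "yb + yp + ym = 1"
  and close: "xb < d" "xp < d" "ym < d"
  shows "xp*(2*yb - (1+ex)*yp - (1-ex)*ym) + xb*((1-ex)*yb - 2*yp + (1+ex)*ym)
        + (m/8)*(2*xm - (1+ey)*xb - (1-ey)*xp) \<ge> m/8"
proof -
  have params: "-1 < ex" "ex < 1" "-1 < ey" "ey < 1" "m \<le> 1 - ex" "m \<le> 1 + ex" "m \<le> 1" using margin by auto
  have factor_xp: "2*yb - (1+ex)*yp - (1-ex)*ym \<ge> -2"
  proof -
    have "(1+ex)*yp \<le> 2*yp" by (rule mult_right_mono) (use params pos in auto)
    moreover have "(1-ex)*ym \<le> 2*ym" by (rule mult_right_mono) (use params pos in auto)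
    ultimately show ?thesis using pos simplex by linarith
  qed
  have factor_xb: "(1-ex)*yb - 2*yp + (1+ex)*ym \<ge> -2"
  proof -
    have "(1-ex)*yb \<ge> 0" "(1+ex)*ym \<ge> 0" using params pos by auto
    then show ?thesis using simplex pos by linarith
  qed
  have factor_y: "2*xm - (1+ey)*xb - (1-ey)*xp \<ge> 2 - 8*d"
  proof -
    have "(1+ey)*xb \<le> 2*d" by (rule mult_mono) (use params pos close in auto)
    moreover have "(1-ey)*xp \<le> 2*d" by (rule mult_mono) (use params pos close in auto)
    ultimately show ?thesis using simplex close by linarith
  qed
  have term_xp: "xp*(2*yb - (1+ex)*yp - (1-ex)*ym) \<ge> xp*(-2)"
    by (rule mult_left_mono[OF factor_xp]) (use pos in simp)
  have term_xb: "xb*((1-ex)*yb - 2*yp + (1+ex)*ym) \<ge> xb*(-2)"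
    by (rule mult_left_mono[OF factor_xb]) (use pos in simp)
  have term_y: "(m/8)*(2*xm - (1+ey)*xb - (1-ey)*xp) \<ge> (m/8)*(2 - 8*d)"
    by (rule mult_left_mono[OF factor_y]) (use margin in simp)
  have "m * d \<le> d" using margin small params by simp
  moreover have term_y': "(m/8)*(2*xm - (1+ey)*xb - (1-ey)*xp) \<ge> m/4 - m*d"
    using term_y by (simp add: algebra_simps)
  ultimately show ?thesis using term_xp term_xb close small margin by linarith
qed

lemma lyapunov_rate_near_x_worst_reply:
  fixes ex ey m d xb xp xm yb yp ym :: real
  assumes margin: "0 < m" "m \<le> 1 - \<bar>ex\<bar>" "m \<le> 1 - \<bar>ey\<bar>" and small: "0 < d" "d \<le> m / 64"
  and pos: "0 < xb" "0 < xp" "0 < xm" "0 < yb" "0 < yp" "0 < ym"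
  and simplex: "xb + xp + xm = 1" "yb + yp + ym = 1" and yb: "yb > 1/2"
  and close: "xm < d" "xb < d" "yp < d"
  shows "xp*(2*yb - (1+ex)*yp - (1-ex)*ym) + xb*((1-ex)*yb - 2*yp + (1+ex)*ym)
        + (m/8)*(2*xm - (1+ey)*xb - (1-ey)*xp) \<ge> m/8"
proof -
  have params: "-1 < ex" "ex < 1" "-1 < ey" "ey < 1" "m \<le> 1 - ex" "m \<le> 1 + ex" "m \<le> 1" using margin by auto
  have factor_xp: "2*yb - (1+ex)*yp - (1-ex)*ym \<ge> m/2 - 2*d"
  proof -
    have "(1+ex)*yp \<le> 2*d" by (rule mult_mono) (use params close pos in auto)
    moreover have "(1-ex)*ym \<le> (1-ex)*yb" by (rule mult_left_mono) (use params simplex yb pos in auto)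
    moreover have "m*(1/2) \<le> (1+ex)*yb" by (rule mult_mono) (use params yb pos in auto)
    ultimately show ?thesis by (simp add: algebra_simps)
  qed
  have factor_xb: "(1-ex)*yb - 2*yp + (1+ex)*ym \<ge> -2"
  proof -
    have "(1-ex)*yb \<ge> 0" "(1+ex)*ym \<ge> 0" using params pos by auto
    then show ?thesis using simplex pos by linarith
  qed
  have factor_y: "2*xm - (1+ey)*xb - (1-ey)*xp \<ge> -2"
  proof -
    have "(1+ey)*xb \<le> 2*xb" by (rule mult_right_mono) (use params pos in auto)
    moreover have "(1-ey)*xp \<le> 2*xp" by (rule mult_right_mono) (use params pos in auto)
    ultimately show ?thesis using simplex pos by linarith
  qed
  have term_xp: "xp*(2*yb - (1+ex)*yp - (1-ex)*ym) \<ge> (1 - 2*d)*(m/2 - 2*d)"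
    by (rule mult_mono) (use factor_xp simplex close small params pos in auto)
  have term_xb: "xb*((1-ex)*yb - 2*yp + (1+ex)*ym) \<ge> xb*(-2)"
    by (rule mult_left_mono[OF factor_xb]) (use pos in simp)
  have term_y: "(m/8)*(2*xm - (1+ey)*xb - (1-ey)*xp) \<ge> (m/8)*(-2)"
    by (rule mult_left_mono[OF factor_y]) (use margin in simp)
  have "m * d \<le> d" using margin small params by simp
  moreover have "d * d \<ge> 0" by simp
  moreover have term_xp': "xp*(2*yb - (1+ex)*yp - (1-ex)*ym) \<ge> m/2 - 2*d - m*d + 4*(d*d)"
    using term_xp by (simp add: algebra_simps)
  ultimately show ?thesis using term_xb term_y close small margin by linarith
qed

lemma payoff_gap_after_switch:
  fixes ex m d u v w :: real
  assumes margin: "0 < m" "m \<le> 1 - \<bar>ex\<bar>" and small: "0 < d" "d \<le> m / 64"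
  and pos: "0 < u" "0 < v" "0 < w" and simplex: "u + v + w = 1" and w: "w < d" and vu: "v \<ge> (1 - 4*d) * u"
  shows "2 * v - (1-ex)*u - (1+ex)*w \<ge> m/8"
proof -
  have params: "-1 < ex" "ex < 1" "m \<le> 1 - ex" "m \<le> 1 + ex" "m \<le> 1" using margin by auto
  have u_term: "(1-ex)*u \<le> (2-m)*u" by (rule mult_right_mono) (use params pos in auto)
  have w_term: "(1+ex)*w \<le> 2*d" by (rule mult_mono) (use params pos w in auto)
  have scaled: "(2 - m/4) * v \<ge> (2 - m/4) * ((1 - 4*d) * u)" by (rule mult_left_mono[OF vu]) (use params in auto)
  have scaled_eq: "(2 - m/4) * ((1 - 4*d) * u) - (2 - 3*m/4) * u = (m/2 - 8*d + m*d) * u"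
    by (simp add: algebra_simps)
  have scaled_nonneg: "(m/2 - 8*d + m*d) * u \<ge> 0" using small margin pos by (intro mult_nonneg_nonneg) auto
  have "2 * v - (2-m)*u - (m/4)*(u+v) = (2 - m/4) * v - (2 - 3*m/4) * u" by (simp add: field_simps)
  then have gap_ge: "2 * v - (2-m)*u \<ge> (m/4)*(u+v)" using scaled scaled_eq scaled_nonneg by linarith
  have "(m/4)*(u+v) \<ge> (m/4)*(1-d)" by (rule mult_left_mono) (use simplex w margin in auto)
  then have "(m/4)*(u+v) \<ge> m/4 - (m*d)/4" by (simp add: algebra_simps)
  moreover have "m * d \<le> d" using margin small params by simp
  ultimately show ?thesis using u_term w_term gap_ge small margin by linarith
qed

lemma payoff_gap_on_y_face:
  fixes ex m d u v w :: real
  assumes margin: "0 < m" "m \<le> 1 - \<bar>ex\<bar>" and small: "0 < d" "d \<le> m / 64"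
  and pos: "0 < u" "0 < v" "0 < w" and simplex: "u + v + w = 1" and w: "w < d"
  shows "(1+ex)*u + (1-ex) * v - 2*w \<ge> 0"
proof -
  have params: "-1 < ex" "ex < 1" "m \<le> 1 - ex" "m \<le> 1 + ex" "m \<le> 1" using margin by auto
  have "(1+ex)*u \<ge> m*u" by (rule mult_right_mono) (use params pos in auto)
  moreover have "(1-ex) * v \<ge> m * v" by (rule mult_right_mono) (use params pos in auto)
  moreover have "m*(u+v) \<ge> m*(1-d)" by (rule mult_left_mono) (use simplex w margin in auto)
  then have "m*u + m * v \<ge> m - m*d" by (simp add: algebra_simps)
  moreover have "m * d \<le> d" using margin small params by simp
  ultimately show ?thesis using w small margin by linarith
qed

lemma payoff_gap_at_x_vertex:
  fixes ey xb xp xm :: real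
  assumes "\<bar>ey\<bar> < 1" "0 < xb" "0 < xp" "xb + xp + xm = 1" "xm \<ge> 1/2"
  shows "2*xm - (1+ey)*xb - (1-ey)*xp \<ge> 0"
proof -
  have "(1+ey)*xb \<le> 2*xb" by (rule mult_right_mono) (use assms in auto)
  moreover have "(1-ey)*xp \<le> 2*xp" by (rule mult_right_mono) (use assms in auto)
  ultimately show ?thesis using assms by linarith
qed

section \<open>Interior orbits cannot shadow the cycle\<close>

locale C4_shadowing =
  fixes ex ey m d :: real and x y :: "real \<Rightarrow> 3 \<Rightarrow> real"
  assumes margin: "0 < m" "m \<le> 1 - \<bar>ex\<bar>" "m \<le> 1 - \<bar>ey\<bar>"
    and small: "0 < d" "d \<le> m / 64"
    and x_pos: "\<And>t i. t \<ge> 0 \<Longrightarrow> x t i > 0" and y_pos: "\<And>t i. t \<ge> 0 \<Longrightarrow> y t i > 0"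
    and x_sum: "\<And>t. t \<ge> 0 \<Longrightarrow> (\<Sum>i\<in>UNIV. x t i) = 1"
    and y_sum: "\<And>t. t \<ge> 0 \<Longrightarrow> (\<Sum>i\<in>UNIV. y t i) = 1"
    and x_cont: "\<And>i. continuous_on {0..} (\<lambda>t. x t i)"
    and y_cont: "\<And>i. continuous_on {0..} (\<lambda>t. y t i)"
    and ln_x_deriv: "\<And>t i. t > 0 \<Longrightarrow>
      ((\<lambda>s. ln (x s i)) has_real_derivative relative_payoff ex (y t) (x t) i) (at t)"
    and ln_y_deriv: "\<And>t i. t > 0 \<Longrightarrow>
      ((\<lambda>s. ln (y s i)) has_real_derivative relative_payoff ey (x t) (y t) i) (at t)"
    and near: "\<And>t. t \<ge> 0 \<Longrightarrow> \<exists>b. near_C4_edge d (x t) (y t) b"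
begin

lemma params_bounds: "\<bar>ex\<bar> < 1" "\<bar>ey\<bar> < 1" "m \<le> 1" "d \<le> 1/64"
  using margin small by auto

lemma x_sum3: "t \<ge> 0 \<Longrightarrow> x t b + x t (b + 1) + x t (b - 1) = 1"
  using x_sum[of t] sum_3_from[of "x t" b] by simp

lemma y_sum3: "t \<ge> 0 \<Longrightarrow> y t b + y t (b + 1) + y t (b - 1) = 1"
  using y_sum[of t] sum_3_from[of "y t" b] by simp

lemma y_sum_distinct: "t \<ge> 0 \<Longrightarrow> j \<noteq> k \<Longrightarrow> k \<noteq> l \<Longrightarrow> j \<noteq> l \<Longrightarrow> y t j + y t k + y t l = 1"
  using y_sum3[of t j] cases_3[of k j] cases_3[of l j] succ_pred_neq_3[of j] by auto

lemma ln_x_cont: "I \<subseteq> {0..} \<Longrightarrow> continuous_on I (\<lambda>t. ln (x t i))"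
  using x_pos by (intro continuous_intros continuous_on_subset[OF x_cont]) (auto simp: less_le)

lemma ln_y_cont: "I \<subseteq> {0..} \<Longrightarrow> continuous_on I (\<lambda>t. ln (y t i))"
  using y_pos by (intro continuous_intros continuous_on_subset[OF y_cont]) (auto simp: less_le)

lemma ln_x_ratio_deriv: "t > 0 \<Longrightarrow> ((\<lambda>s. ln (x s i) - ln (x s j)) has_real_derivative
    rsp_payoff ex (y t) i - rsp_payoff ex (y t) j) (at t)"
  using DERIV_diff[OF ln_x_deriv[of t i] ln_x_deriv[of t j]] by (simp add: relative_payoff_def)

lemma ln_y_ratio_deriv: "t > 0 \<Longrightarrow> ((\<lambda>s. ln (y s i) - ln (y s j)) has_real_derivative
    rsp_payoff ey (x t) i - rsp_payoff ey (x t) j) (at t)"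
  using DERIV_diff[OF ln_y_deriv[of t i] ln_y_deriv[of t j]] by (simp add: relative_payoff_def)

lemma near_edge_y_below_half:
  assumes "t \<ge> 0" "\<And>j. y t j < 1/2"
  obtains b where "x t b < d" "x t (b + 1) < d" "y t (b - 1) < d"
proof -
  obtain b where b: "near_C4_edge d (x t) (y t) b" using near[OF assms(1)] by blast
  note b = b[unfolded near_C4_edge_def]
  have "y t b + y t (b + 1) + y t (b - 1) = 1" using y_sum3 assms(1) by simp
  then have "x t b < d \<and> x t (b + 1) < d \<and> y t (b - 1) < d"
    using b assms(2)[of b] params_bounds by auto
  then show thesis using that by blast
qed

lemma y_others_near_half:
  assumes "t \<ge> 0" "\<And>l. y t l < 1/2" "y t j < d" "k \<noteq> j"
  shows "y t k > 1/2 - d"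
proof -
  obtain l where "l \<noteq> j" "l \<noteq> k" using cases_3[of _ j] succ_pred_neq_3[of j] by metis
  then have "y t j + y t k + y t l = 1" using y_sum_distinct[of t j k l] assms(1,4) by auto
  then show ?thesis using assms(2)[of l] assms(3) by linarith
qed

lemma y_below_half_edge_persists:
  assumes T: "T \<ge> 0" and below: "\<And>t j. t \<ge> T \<Longrightarrow> y t j < 1/2"
    and edge: "x T b < d" "x T (b + 1) < d" "y T (b - 1) < d" and t: "T \<le> t"
  shows "x t b < d \<and> x t (b + 1) < d \<and> y t (b - 1) < 1/4"
proof -
  have other_edge: "y s (b - 1) > 1/2 - d"
    if "T \<le> s" "b' \<noteq> b" "y s (b' - 1) < d" for s b'
    using y_others_near_half[of s "b' - 1" "b - 1"] below that T by auto
  have "y s (b - 1) \<noteq> 1/4" if s: "T \<le> s" for s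
  proof -
    obtain b' where "x s b' < d" "x s (b' + 1) < d" "y s (b' - 1) < d"
      by (rule near_edge_y_below_half[of s]) (use below s T in auto)
    then show ?thesis
    proof (cases "b' = b")
      case False
      then show ?thesis using other_edge[OF s False \<open>y s (b' - 1) < d\<close>] params_bounds by simp
    qed (use params_bounds in simp)
  qed
  moreover have "continuous_on {T..t} (\<lambda>s. y s (b - 1))"
    using continuous_on_subset[OF y_cont] T by auto
  ultimately have "y T (b - 1) < 1/4 \<longleftrightarrow> y t (b - 1) < 1/4"
    using no_crossing_same_side[OF t] by blast
  then have pred_small: "y t (b - 1) < 1/4" using edge params_bounds by auto
  obtain b' where b': "x t b' < d" "x t (b' + 1) < d" "y t (b' - 1) < d"
    by (rule near_edge_y_below_half[of t]) (use below t T in auto)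
  have "b' = b"
  proof (rule ccontr)
    assume ne: "b' \<noteq> b"
    show False using other_edge[OF t ne b'(3)] pred_small params_bounds by simp
  qed
  then show ?thesis using b' pred_small by auto
qed

lemma y_not_eventually_below_half:
  assumes T: "T \<ge> 0" and below: "\<And>t j. t \<ge> T \<Longrightarrow> y t j < 1/2"
  shows False
proof -
  obtain b where edge: "x T b < d" "x T (b + 1) < d" "y T (b - 1) < d"
    by (rule near_edge_y_below_half[of T]) (use below T in auto)
  have persists: "x t b < d \<and> x t (b + 1) < d \<and> y t (b - 1) < 1/4" if "T \<le> t" for t
    by (rule y_below_half_edge_persists[OF T below edge that])
  show False
  proof (rule uniform_growth_contradicts_upper_bound[of T "\<lambda>t. ln (y t (b + 1)) - ln (y t b)" 1])
    show "continuous_on {T..} (\<lambda>t. ln (y t (b + 1)) - ln (y t b))"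
      by (intro continuous_on_diff ln_y_cont) (use T in auto)
  next
    fix t assume "T < t"
    then show "((\<lambda>t. ln (y t (b + 1)) - ln (y t b)) has_real_derivative
        rsp_payoff ey (x t) (b + 1) - rsp_payoff ey (x t) b) (at t)"
      using ln_y_ratio_deriv T by simp
    have t0: "t \<ge> 0" using T \<open>T < t\<close> by simp
    have xb: "x t b < d" "x t (b + 1) < d" using persists \<open>T < t\<close> by auto
    have "(1 + ey) * x t b \<le> 2 * d" "(1 - ey) * x t (b + 1) \<le> 2 * d"
      using xb x_pos[OF t0] params_bounds by (auto intro!: mult_mono simp: abs_less_iff less_imp_le)
    moreover have "x t (b - 1) > 1 - 2 * d" using x_sum3[OF t0, of b] xb by linarith
    ultimately show "rsp_payoff ey (x t) (b + 1) - rsp_payoff ey (x t) b \<ge> 1"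
      unfolding rsp_payoff_diff using params_bounds by linarith
  next
    fix t assume "T \<le> t"
    then have t0: "t \<ge> 0" using T by simp
    have "y t b > 1/4"
      using y_sum3[OF t0, of b] persists[OF \<open>T \<le> t\<close>] below[OF \<open>T \<le> t\<close>, of "b + 1"] by linarith
    then have "ln (y t b) \<ge> ln (1/4)" by (intro ln_mono) auto
    moreover have "ln (y t (b + 1)) \<le> ln (1/2)"
      using below[OF \<open>T \<le> t\<close>] y_pos[OF t0] by (intro ln_mono) (auto simp: less_imp_le)
    ultimately show "ln (y t (b + 1)) - ln (y t b) \<le> ln (1/2) - ln (1/4)" by linarith
  qed simp
qed

lemma near_edge_y_above_half:
  assumes t0: "t \<ge> 0" and yb: "y t b > 1/2"
  shows "(y t (b + 1) < d \<and> y t (b - 1) < d) \<or> (x t b < d \<and> x t (b + 1) < d \<and> y t (b - 1) < d)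
     \<or> (x t (b - 1) < d \<and> x t b < d \<and> y t (b + 1) < d)"
proof -
  obtain b' where b': "near_C4_edge d (x t) (y t) b'" using near[OF t0] by blast
  note b' = b'[unfolded near_C4_edge_def]
  have "y t b \<ge> d" using yb params_bounds by auto
  consider "b' = b" | "b' = b + 1" | "b' = b - 1" using cases_3[of b' b] by blast
  then show ?thesis
  proof cases
    case 1 then show ?thesis using b' by auto
  next
    case 2 then show ?thesis using b' \<open>y t b \<ge> d\<close> by (simp only: succ_pred_neq_3 succ_pred_3) auto
  next
    case 3 then show ?thesis using b' \<open>y t b \<ge> d\<close> by (simp only: succ_pred_neq_3 succ_pred_3) auto
  qed
qed

text \<open>The Lyapunov function \<open>ln x\<^sub>b\<^sub>-\<^sub>1 + (m/8) ln (y\<^sub>b\<^sub>+\<^sub>1 / y\<^sub>b)\<close> grows at rate \<open>m/8\<close> while \<open>y\<^sub>b > 1/2\<close>: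
  first \<open>x\<close> moves to the best reply \<open>b - 1\<close>, and from there \<open>y\<close> is driven away from \<open>b\<close>.\<close>
lemma lyapunov_rate_ge:
  assumes t0: "t > 0" and yb: "y t b > 1/2"
  shows "relative_payoff ex (y t) (x t) (b - 1) +
    (m/8) * (rsp_payoff ey (x t) (b + 1) - rsp_payoff ey (x t) b) \<ge> m/8"
proof -
  have t0': "t \<ge> 0" using t0 by simp
  have xm: "x t (b - 1) = 1 - x t b - x t (b + 1)" using x_sum3[OF t0', of b] by simp
  have eq: "relative_payoff ex (y t) (x t) (b - 1) +
     (m/8) * (rsp_payoff ey (x t) (b + 1) - rsp_payoff ey (x t) b) =
     x t (b + 1) * (2 * y t b - (1 + ex) * y t (b + 1) - (1 - ex) * y t (b - 1))
     + x t b * ((1 - ex) * y t b - 2 * y t (b + 1) + (1 + ex) * y t (b - 1))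
     + (m/8) * (2 * x t (b - 1) - (1 + ey) * x t b - (1 - ey) * x t (b + 1))"
    unfolding relative_payoff_def sum_3_from[of _ b] rsp_payoff_cyclic(2,3)
    unfolding rsp_payoff_cyclic(1) xm
    by (simp add: algebra_simps)
  have sums: "x t b + x t (b + 1) + x t (b - 1) = 1" "y t b + y t (b + 1) + y t (b - 1) = 1"
    using x_sum3 y_sum3 t0' by auto
  note pos = x_pos[OF t0', of b] x_pos[OF t0', of "b + 1"] x_pos[OF t0', of "b - 1"]
    y_pos[OF t0', of b] y_pos[OF t0', of "b + 1"] y_pos[OF t0', of "b - 1"]
  from near_edge_y_above_half[OF t0' yb] show ?thesis
  proof (elim disjE conjE)
    assume "y t (b + 1) < d" "y t (b - 1) < d"
    then show ?thesis using lyapunov_rate_near_y_vertex[OF margin small pos sums] eq by simp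
  next
    assume "x t b < d" "x t (b + 1) < d" "y t (b - 1) < d"
    then show ?thesis using lyapunov_rate_near_x_best_reply[OF margin small pos sums] eq by simp
  next
    assume "x t (b - 1) < d" "x t b < d" "y t (b + 1) < d"
    then show ?thesis using lyapunov_rate_near_x_worst_reply[OF margin small pos sums yb] eq by simp
  qed
qed

lemma y_not_eventually_above_half:
  assumes T: "T \<ge> 0" and above: "\<And>t. t \<ge> T \<Longrightarrow> y t b > 1/2"
  shows False
proof (rule uniform_growth_contradicts_upper_bound[of T
      "\<lambda>t. ln (x t (b - 1)) + (m/8) * (ln (y t (b + 1)) - ln (y t b))" "m/8"])
  show "continuous_on {T..} (\<lambda>t. ln (x t (b - 1)) + (m/8) * (ln (y t (b + 1)) - ln (y t b)))"
    by (intro continuous_on_add continuous_on_mult_left continuous_on_diff ln_x_cont ln_y_cont)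
      (use T in auto)
  show "0 < m / 8" using margin by simp
next
  fix t assume "T < t"
  then have t0: "t > 0" using T by auto
  show "((\<lambda>t. ln (x t (b - 1)) + (m/8) * (ln (y t (b + 1)) - ln (y t b))) has_real_derivative
     relative_payoff ex (y t) (x t) (b - 1) +
     (m/8) * (rsp_payoff ey (x t) (b + 1) - rsp_payoff ey (x t) b)) (at t)"
    by (intro DERIV_add DERIV_cmult ln_x_deriv ln_y_ratio_deriv t0)
  show "relative_payoff ex (y t) (x t) (b - 1) +
     (m/8) * (rsp_payoff ey (x t) (b + 1) - rsp_payoff ey (x t) b) \<ge> m/8"
    using lyapunov_rate_ge[OF t0] above \<open>T < t\<close> by simp
next
  fix t assume "T \<le> t"
  then have t0: "t \<ge> 0" using T by auto
  have "x t (b - 1) \<le> 1"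
    using x_sum3[OF t0, of b] x_pos[OF t0, of b] x_pos[OF t0, of "b + 1"] by linarith
  then have "ln (x t (b - 1)) \<le> 0" using x_pos[OF t0] by simp
  moreover have "y t (b + 1) \<le> y t b"
    using y_sum3[OF t0, of b] y_pos[OF t0, of "b - 1"] above[OF \<open>T \<le> t\<close>] by linarith
  then have "ln (y t (b + 1)) - ln (y t b) \<le> 0" using y_pos[OF t0] by simp
  then have "(m/8) * (ln (y t (b + 1)) - ln (y t b)) \<le> 0"
    using margin by (simp add: mult_nonneg_nonpos)
  ultimately show "ln (x t (b - 1)) + (m/8) * (ln (y t (b + 1)) - ln (y t b)) \<le> 0" by linarith
qed

lemma y_crosses_half_after:
  assumes T: "T \<ge> 0"
  obtains t j where "t \<ge> T" "y t j = 1/2"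
proof (rule ccontr)
  assume none: "\<not> thesis"
  note found = that
  have H: "y t j \<noteq> 1/2" if "t \<ge> T" for t j using that none found by blast
  have keep: "y T j < 1/2 \<longleftrightarrow> y t j < 1/2" if "t \<ge> T" for t j
  proof (rule no_crossing_same_side[OF that])
    show "continuous_on {T..t} (\<lambda>s. y s j)" by (rule continuous_on_subset[OF y_cont]) (use T in auto)
  qed (use H in auto)
  show False
  proof (cases "\<exists>j. y T j > 1/2")
    case True
    then obtain j where j: "y T j > 1/2" by blast
    have "y t j > 1/2" if "t \<ge> T" for t
      using keep[OF that, of j] H[OF that, of j] j by auto
    then show False using y_not_eventually_above_half[OF T] by blast
  next
    case False
    then have "y T j < 1/2" for j using H T by (metis linorder_neqE_linordered_idom order_refl)
    then show False using y_not_eventually_below_half[OF T] keep by blast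
  qed
qed

lemma near_switch_at_y_half:
  assumes t0: "t \<ge> 0" and half: "y t j = 1/2"
  obtains b where "near_switch d (x t) (y t) b"
proof -
  obtain b where b: "near_C4_edge d (x t) (y t) b" using near[OF t0] by blast
  note b = b[unfolded near_C4_edge_def]
  have sum: "y t b + y t (b + 1) + y t (b - 1) = 1" using y_sum3[OF t0] by simp
  note pos = y_pos[OF t0, of b] y_pos[OF t0, of "b + 1"] y_pos[OF t0, of "b - 1"]
  have j: "j = b \<or> j = b + 1 \<or> j = b - 1" using cases_3[of j b] by blast
  have "x t b < d \<and> x t (b + 1) < d \<and> y t (b - 1) < d"
    using b j half sum pos params_bounds by auto
  moreover have "\<bar>y t b - 1/2\<bar> \<le> d \<and> \<bar>y t (b + 1) - 1/2\<bar> \<le> d"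
    using calculation j half sum pos params_bounds by auto
  ultimately show thesis using that unfolding near_switch_def by blast
qed

lemma switching_time_after:
  assumes "T \<ge> 0"
  obtains t b where "t \<ge> T" "near_switch d (x t) (y t) b"
proof -
  obtain t j where "t \<ge> T" "y t j = 1/2" using y_crosses_half_after[OF assms] .
  moreover from this obtain b where "near_switch d (x t) (y t) b"
    using near_switch_at_y_half assms by (meson order_trans)
  ultimately show thesis using that by blast
qed

lemma y_pred_dichotomy:
  assumes t0: "t \<ge> 0" and xm: "x t (b - 1) \<ge> 1/2"
  shows "y t (b - 1) < d \<or> y t (b - 1) > 1 - 2 * d"
proof -
  obtain b' where b': "near_C4_edge d (x t) (y t) b'" using near[OF t0] by blast
  note b' = b'[unfolded near_C4_edge_def]
  have y_total: "y t b + y t (b + 1) + y t (b - 1) = 1" using y_sum3[OF t0] by simp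
  have "x t (b - 1) \<ge> d" using xm params_bounds by auto
  consider "b' = b" | "b' = b + 1" | "b' = b - 1" using cases_3[of b' b] by blast
  then show ?thesis
  proof cases
    case 1 then show ?thesis using b' \<open>x t (b - 1) \<ge> d\<close> by auto
  next
    case 2 then show ?thesis using b' \<open>x t (b - 1) \<ge> d\<close> by (simp only: succ_pred_neq_3 succ_pred_3) auto
  next
    case 3 then show ?thesis using b' \<open>x t (b - 1) \<ge> d\<close> y_total by (simp only: succ_pred_neq_3 succ_pred_3) auto
  qed
qed

lemma near_edge_x_pred_half:
  assumes t0: "t \<ge> 0" and xm: "x t (b - 1) = 1/2" and ym: "y t (b - 1) < d"
  shows "(x t (b + 1) < d \<and> y t (b + 1) < d) \<or> (x t b < d \<and> y t b < d)"
proof -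
  obtain b' where b': "near_C4_edge d (x t) (y t) b'" using near[OF t0] by blast
  note b' = b'[unfolded near_C4_edge_def]
  have y_total: "y t b + y t (b + 1) + y t (b - 1) = 1" using y_sum3[OF t0] by simp
  have x_total: "x t b + x t (b + 1) + x t (b - 1) = 1" using x_sum3[OF t0] by simp
  have "x t (b - 1) \<ge> d" using xm params_bounds by auto
  consider "b' = b" | "b' = b + 1" | "b' = b - 1" using cases_3[of b' b] by blast
  then show ?thesis
  proof cases
    case 1 then show ?thesis using b' \<open>x t (b - 1) \<ge> d\<close> x_total xm params_bounds by auto
  next
    case 2 then show ?thesis using b' \<open>x t (b - 1) \<ge> d\<close> ym by (simp only: succ_pred_neq_3 succ_pred_3) auto
  next
    case 3 then show ?thesis using b' \<open>x t (b - 1) \<ge> d\<close> y_total ym params_bounds by (simp only: succ_pred_neq_3 succ_pred_3) auto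
  qed
qed

lemma y_pred_below_half_invariant:
  assumes "0 \<le> a" "a \<le> c" and xm: "\<And>t. a \<le> t \<Longrightarrow> t \<le> c \<Longrightarrow> x t (b - 1) \<ge> 1/2"
  shows "y a (b - 1) < 1/2 \<longleftrightarrow> y c (b - 1) < 1/2"
proof (rule no_crossing_same_side[OF assms(2)])
  show "continuous_on {a..c} (\<lambda>t. y t (b - 1))" by (rule continuous_on_subset[OF y_cont]) (use assms in auto)
  fix t assume t: "a \<le> t" "t \<le> c"
  then have "y t (b - 1) < d \<or> y t (b - 1) > 1 - 2 * d" using y_pred_dichotomy[of t b] xm assms by auto
  then show "y t (b - 1) \<noteq> 1/2" using params_bounds by auto
qed

lemma y_ratio_mono:
  assumes "0 \<le> a" "a \<le> c" and x_pred: "\<And>t. a \<le> t \<Longrightarrow> t \<le> c \<Longrightarrow> x t (b - 1) \<ge> 1/2"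
  shows "y a (b + 1) / y a b \<le> y c (b + 1) / y c b"
proof -
  have "(ln (y c (b + 1)) - ln (y c b)) - (ln (y a (b + 1)) - ln (y a b)) \<ge> 0 * (c - a)"
  proof (rule increment_ge_of_deriv_ge[OF assms(2),
        where f' = "\<lambda>t. rsp_payoff ey (x t) (b + 1) - rsp_payoff ey (x t) b"])
    show "continuous_on {a..c} (\<lambda>t. ln (y t (b + 1)) - ln (y t b))"
      by (intro continuous_on_diff ln_y_cont) (use assms in auto)
    fix t assume t: "a < t" "t < c"
    then show "((\<lambda>t. ln (y t (b + 1)) - ln (y t b)) has_real_derivative
        rsp_payoff ey (x t) (b + 1) - rsp_payoff ey (x t) b) (at t)"
      using ln_y_ratio_deriv assms by simp
    have t0: "t \<ge> 0" using t assms by auto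
    show "0 \<le> rsp_payoff ey (x t) (b + 1) - rsp_payoff ey (x t) b"
      unfolding rsp_payoff_diff
      by (rule payoff_gap_at_x_vertex) (use params_bounds x_pos[OF t0] x_sum3[OF t0, of b] x_pred t in auto)
  qed
  moreover have "ln (y a (b + 1) / y a b) = ln (y a (b + 1)) - ln (y a b)"
    "ln (y c (b + 1) / y c b) = ln (y c (b + 1)) - ln (y c b)"
    using y_pos[OF assms(1), of b] y_pos[OF assms(1), of "b + 1"] y_pos[of c b] y_pos[of c "b + 1"] assms(1,2)
    by (simp_all add: ln_div)
  ultimately have "ln (y a (b + 1) / y a b) \<le> ln (y c (b + 1) / y c b)" by simp
  then show ?thesis using y_pos[OF assms(1)] y_pos[of c] assms(1,2) by (subst (asm) ln_le_cancel_iff) auto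
qed

lemma y_pred_stays_small:
  assumes "0 \<le> a" "a \<le> s" "s \<le> c" and x_pred: "\<And>t. a \<le> t \<Longrightarrow> t \<le> c \<Longrightarrow> x t (b - 1) \<ge> 1/2"
    and "y s (b - 1) < d" and t: "a \<le> t" "t \<le> c"
  shows "y t (b - 1) < d"
proof -
  have "y t (b - 1) < 1/2"
  proof (cases "t \<le> s")
    case True
    have "y t (b - 1) < 1/2 \<longleftrightarrow> y s (b - 1) < 1/2"
      by (rule y_pred_below_half_invariant) (use assms True in auto)
    then show ?thesis using assms params_bounds by auto
  next
    case False
    have "y s (b - 1) < 1/2 \<longleftrightarrow> y t (b - 1) < 1/2"
      by (rule y_pred_below_half_invariant) (use assms False in auto)
    then show ?thesis using assms params_bounds by auto
  qed
  then show ?thesis using y_pred_dichotomy[of t b] x_pred[OF t] assms params_bounds by force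
qed

lemma near_switch_bounds:
  assumes "s \<ge> 0" "near_switch d (x s) (y s) b"
  shows "x s (b - 1) > 1 - 2 * d" "1 - 4 * d \<le> y s (b + 1) / y s b"
    "y s (b + 1) / y s b < 2" "1/2 < y s (b + 1) / y s b"
proof -
  have y: "\<bar>y s b - 1/2\<bar> \<le> d" "\<bar>y s (b + 1) - 1/2\<bar> \<le> d" and yb: "y s b > 0"
    using assms y_pos unfolding near_switch_def by auto
  show "x s (b - 1) > 1 - 2 * d" using x_sum3[OF assms(1), of b] assms(2)
    unfolding near_switch_def by linarith
  have "(1 - 4 * d) * y s b \<le> (1 - 4 * d) * (1/2 + d)"
    by (rule mult_left_mono) (use y params_bounds in auto)
  also have "\<dots> \<le> 1/2 - d" using small by (simp add: algebra_simps)
  finally show "1 - 4 * d \<le> y s (b + 1) / y s b" using y yb by (simp add: le_divide_eq)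
  show "y s (b + 1) / y s b < 2" "1/2 < y s (b + 1) / y s b"
    using y yb params_bounds by (auto simp: divide_less_eq less_divide_eq)
qed

lemma x_leaves_after_switch:
  assumes s0: "s \<ge> 0" and sw: "near_switch d (x s) (y s) b"
  obtains t where "t > s" "x t (b - 1) \<le> 1/2"
proof (rule ccontr)
  assume none: "\<not> thesis"
  note found = that
  have x_pred: "x t (b - 1) \<ge> 1/2" if "t \<ge> s" for t
  proof (cases "t = s")
    case False
    then have "s < t" using that by simp
    then show ?thesis using found[of t] none by fastforce
  qed (use near_switch_bounds(1)[OF s0 sw] params_bounds in simp)
  have y_pred: "y t (b - 1) < d" if "t \<ge> s" for t
    by (rule y_pred_stays_small[of s s t]) (use s0 sw x_pred that in \<open>auto simp: near_switch_def\<close>)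
  have y_succ: "y t (b + 1) \<ge> (1 - 4 * d) * y t b" if "t \<ge> s" for t
  proof -
    have "1 - 4 * d \<le> y t (b + 1) / y t b"
      using near_switch_bounds(2)[OF s0 sw] y_ratio_mono[OF s0 that x_pred] by simp
    then show ?thesis using y_pos[of t b] s0 that by (simp add: le_divide_eq)
  qed
  show False
  proof (rule uniform_growth_contradicts_upper_bound[of s "\<lambda>t. ln (x t b) - ln (x t (b - 1))" "m/8"
        "\<lambda>t. rsp_payoff ex (y t) b - rsp_payoff ex (y t) (b - 1)" "ln 2"])
    show "continuous_on {s..} (\<lambda>t. ln (x t b) - ln (x t (b - 1)))"
      by (intro continuous_on_diff ln_x_cont) (use s0 in auto)
    show "0 < m / 8" using margin by simp
  next
    fix t assume "s < t"
    then have t0: "t > 0" "t \<ge> 0" using s0 by auto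
    show "((\<lambda>t. ln (x t b) - ln (x t (b - 1))) has_real_derivative
        rsp_payoff ex (y t) b - rsp_payoff ex (y t) (b - 1)) (at t)"
      using ln_x_ratio_deriv[OF t0(1)] by simp
    show "rsp_payoff ex (y t) b - rsp_payoff ex (y t) (b - 1) \<ge> m / 8"
      unfolding rsp_payoff_diff
      by (rule payoff_gap_after_switch)
        (use margin small y_pos[OF t0(2)] y_sum3[OF t0(2), of b] y_pred y_succ \<open>s < t\<close> in auto)
  next
    fix t assume "s \<le> t"
    then have t0: "t \<ge> 0" using s0 by auto
    have "x t b \<le> 1"
      using x_sum3[OF t0, of b] x_pos[OF t0, of "b + 1"] x_pos[OF t0, of "b - 1"] by linarith
    then have "ln (x t b) \<le> 0" using x_pos[OF t0] by simp
    moreover have "ln (x t (b - 1)) \<ge> ln (1/2)" using x_pred[OF \<open>s \<le> t\<close>] by (intro ln_mono) auto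
    ultimately show "ln (x t b) - ln (x t (b - 1)) \<le> ln 2" by (simp add: ln_div)
  qed
qed

text \<open>On the face \<open>y\<^sub>b\<^sub>-\<^sub>1 \<approx> 0\<close>, strategy \<open>b\<close> of \<open>x\<close> earns at least as much as \<open>b + 1\<close>.\<close>
lemma x_order_preserved:
  assumes "0 \<le> a" "a \<le> c" and y_pred: "\<And>t. a \<le> t \<Longrightarrow> t \<le> c \<Longrightarrow> y t (b - 1) < d"
    and "x a (b + 1) < x a b"
  shows "x c (b + 1) < x c b"
proof -
  have "(ln (x c b) - ln (x c (b + 1))) - (ln (x a b) - ln (x a (b + 1))) \<ge> 0 * (c - a)"
  proof (rule increment_ge_of_deriv_ge[OF assms(2),
        where f' = "\<lambda>t. rsp_payoff ex (y t) b - rsp_payoff ex (y t) (b + 1)"])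
    show "continuous_on {a..c} (\<lambda>t. ln (x t b) - ln (x t (b + 1)))"
      by (intro continuous_on_diff ln_x_cont) (use assms in auto)
    fix t assume t: "a < t" "t < c"
    then have t0: "t > 0" "t \<ge> 0" using assms by auto
    show "((\<lambda>t. ln (x t b) - ln (x t (b + 1))) has_real_derivative
        rsp_payoff ex (y t) b - rsp_payoff ex (y t) (b + 1)) (at t)"
      using ln_x_ratio_deriv[OF t0(1)] by simp
    show "0 \<le> rsp_payoff ex (y t) b - rsp_payoff ex (y t) (b + 1)"
      unfolding rsp_payoff_diff
      by (rule payoff_gap_on_y_face) (use margin small y_pos[OF t0(2)] y_sum3[OF t0(2), of b] y_pred t in auto)
  qed
  moreover have "ln (x a (b + 1)) < ln (x a b)" using assms(1,4) x_pos[of a] by simp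
  ultimately have "ln (x c (b + 1)) < ln (x c b)" by linarith
  then show ?thesis using assms(1,2) x_pos[of c] by simp
qed

text \<open>A visit of \<open>x\<close> to \<open>b - 1\<close> around a switch of \<open>y\<close> from \<open>b\<close> to \<open>b + 1\<close> would have to arrive
  from \<open>b\<close> and leave towards \<open>b + 1\<close>, against the order kept by the previous lemma.\<close>
lemma no_return_after_switch:
  assumes s0: "s \<ge> 0" and sw: "near_switch d (x s) (y s) b"
    and before: "0 \<le> t0" "t0 \<le> s" "x t0 (b - 1) \<le> 1/2"
  shows False
proof -
  note xs = near_switch_bounds(1)[OF s0 sw]
  have cont: "continuous_on {a..c} (\<lambda>t. x t (b - 1))" if "0 \<le> a" for a c
    by (rule continuous_on_subset[OF x_cont]) (use that in auto)
  obtain t1 where t1: "t0 \<le> t1" "t1 < s" "x t1 (b - 1) = 1/2"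
    and t1_above: "\<And>t. t1 < t \<Longrightarrow> t \<le> s \<Longrightarrow> x t (b - 1) > 1/2"
    by (rule last_crossing[OF before(2) cont[OF before(1)], of "1/2"]) (use before xs params_bounds in auto)
  obtain t2' where t2': "t2' > s" "x t2' (b - 1) \<le> 1/2" using x_leaves_after_switch[OF s0 sw] .
  obtain t2 where t2: "s < t2" "x t2 (b - 1) = 1/2"
    and t2_below: "\<And>t. s \<le> t \<Longrightarrow> t < t2 \<Longrightarrow> x t (b - 1) > 1/2"
    by (rule first_crossing[of s t2' "\<lambda>t. x t (b - 1)" "1/2"]) (use cont[OF s0] t2' xs params_bounds in auto)
  have t1p: "t1 \<ge> 0" and t2p: "t2 \<ge> 0" using t1 t2 before by auto
  have x_pred: "x t (b - 1) \<ge> 1/2" if "t1 \<le> t" "t \<le> t2" for t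
    using t1_above[of t] t2_below[of t] t1(3) t2(2) that by (cases "t \<le> s"; cases "t = t1"; cases "t = t2") auto
  have y_pred: "y t (b - 1) < d" if "t1 \<le> t" "t \<le> t2" for t
    by (rule y_pred_stays_small[of t1 s t2]) (use t1 t2 t1p x_pred sw that in \<open>auto simp: near_switch_def\<close>)
  have "y t1 (b + 1) / y t1 b \<le> y s (b + 1) / y s b"
    by (rule y_ratio_mono) (use t1 t1p x_pred t2 in auto)
  then have "y t1 (b + 1) / y t1 b < 2" using near_switch_bounds(3)[OF s0 sw] by linarith
  then have "\<not> y t1 b < d"
    using y_sum3[OF t1p, of b] y_pred[of t1] y_pos[OF t1p, of b] t1 t2 params_bounds
    by (auto simp: divide_less_eq)
  then have "x t1 (b + 1) < d" using near_edge_x_pred_half[OF t1p t1(3) y_pred] t1 t2 by auto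
  then have "x t1 (b + 1) < x t1 b" using x_sum3[OF t1p, of b] t1(3) params_bounds by linarith
  then have "x t2 (b + 1) < x t2 b"
    using x_order_preserved[of t1 t2] t1 t2 t1p y_pred by auto
  have "y s (b + 1) / y s b \<le> y t2 (b + 1) / y t2 b"
    by (rule y_ratio_mono) (use s0 x_pred t1 t2 in auto)
  then have "1/2 < y t2 (b + 1) / y t2 b" using near_switch_bounds(4)[OF s0 sw] by linarith
  then have "\<not> y t2 (b + 1) < d"
    using y_sum3[OF t2p, of b] y_pred[of t2] y_pos[OF t2p, of b] t1 t2 params_bounds
    by (auto simp: less_divide_eq)
  then have "x t2 b < d" using near_edge_x_pred_half[OF t2p t2(2) y_pred] t1 t2 by auto
  then have "x t2 b < x t2 (b + 1)" using x_sum3[OF t2p, of b] t2(2) params_bounds by linarith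
  with \<open>x t2 (b + 1) < x t2 b\<close> show False by simp
qed

lemma C4_shadowing_absurd: False
proof -
  obtain s0 b0 where s0: "s0 \<ge> 0" "near_switch d (x s0) (y s0) b0"
    using switching_time_after[of 0] by auto
  obtain t where t: "t > s0" "x t (b0 - 1) \<le> 1/2" using x_leaves_after_switch[OF s0] .
  obtain s b where s: "s \<ge> t" "near_switch d (x s) (y s) b"
    using switching_time_after[of t] t s0 by auto
  have "s \<ge> 0" using s t s0 by simp
  show False
  proof (cases "b = b0")
    case True
    then show False using no_return_after_switch[OF \<open>s \<ge> 0\<close> s(2), of t] t s s0 by auto
  next
    case False
    then have "b - 1 = b0 \<or> b - 1 = b0 + 1" using cases_3[of "b - 1" b0] by auto
    moreover have "x s0 b0 < d" "x s0 (b0 + 1) < d" using s0(2) unfolding near_switch_def by auto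
    ultimately have "x s0 (b - 1) < d" by metis
    then show False
      using no_return_after_switch[OF \<open>s \<ge> 0\<close> s(2), of s0] s t s0 params_bounds by auto
  qed
qed

end

section \<open>Null basins and stability indices\<close>

lemma interior_not_in_C4_basin:
  assumes ex: "\<bar>ex\<bar> < 1" and ey: "\<bar>ey\<bar> < 1"
    and d: "0 < d" "d \<le> min (1 - \<bar>ex\<bar>) (1 - \<bar>ey\<bar>) / 64"
    and p: "p \<in> basin ex ey C4 d"
  shows "\<exists>i. fst p $ i = 0 \<or> snd p $ i = 0"
proof (rule ccontr)
  assume "\<not> ?thesis"
  moreover have "\<forall>i. fst p $ i \<ge> 0 \<and> snd p $ i \<ge> 0"
    using p unfolding basin_def Delta_def simplex3_def by auto
  ultimately have px: "fst p $ i > 0" and py: "snd p $ i > 0" for i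
    using less_eq_real_def by auto
  from p obtain \<phi> where ph: "p \<in> Delta" "\<phi> 0 = p" "is_traj ex ey \<phi>" "\<forall>t\<ge>0. \<phi> t \<in> nbhd C4 d"
    unfolding basin_def by blast
  have sum0: "(\<Sum>i\<in>UNIV. fst (\<phi> 0) $ i) = 1" "(\<Sum>i\<in>UNIV. snd (\<phi> 0) $ i) = 1"
    using ph(1,2) unfolding Delta_def simplex3_def by auto
  interpret C4_shadowing ex ey "min (1 - \<bar>ex\<bar>) (1 - \<bar>ey\<bar>)" d
    "\<lambda>t. ($) (fst (\<phi> t))" "\<lambda>t. ($) (snd (\<phi> t))"
  proof
    show "\<And>t i. 0 \<le> t \<Longrightarrow> 0 < fst (\<phi> t) $ i"
      using is_traj_fst_pos[OF ph(3)] px ph(2) by auto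
    show "\<And>t i. 0 \<le> t \<Longrightarrow> 0 < snd (\<phi> t) $ i"
      using is_traj_snd_pos[OF ph(3)] py ph(2) by auto
    show "\<And>t. 0 \<le> t \<Longrightarrow> (\<Sum>i\<in>UNIV. fst (\<phi> t) $ i) = 1"
      using is_traj_fst_sum[OF ph(3) sum0(1)] by auto
    show "\<And>t. 0 \<le> t \<Longrightarrow> (\<Sum>i\<in>UNIV. snd (\<phi> t) $ i) = 1"
      using is_traj_snd_sum[OF ph(3) sum0(2)] by auto
    show "\<And>t i. 0 < t \<Longrightarrow> ((\<lambda>s. ln (fst (\<phi> s) $ i)) has_real_derivative
        relative_payoff ex (($) (snd (\<phi> t))) (($) (fst (\<phi> t))) i) (at t)"
      using is_traj_ln_fst_deriv[OF ph(3)] is_traj_fst_pos[OF ph(3)] px ph(2) by auto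
    show "\<And>t i. 0 < t \<Longrightarrow> ((\<lambda>s. ln (snd (\<phi> s) $ i)) has_real_derivative
        relative_payoff ey (($) (fst (\<phi> t))) (($) (snd (\<phi> t))) i) (at t)"
      using is_traj_ln_snd_deriv[OF ph(3)] is_traj_snd_pos[OF ph(3)] py ph(2) by auto
    show "\<And>t. 0 \<le> t \<Longrightarrow> \<exists>b. near_C4_edge d (($) (fst (\<phi> t))) (($) (snd (\<phi> t))) b"
      using near_C4_imp_near_edge ph(4) unfolding nbhd_def by blast
  qed (use ex ey d is_traj_continuous[OF ph(3)] in \<open>auto intro!: continuous_intros\<close>)
  show False by (rule C4_shadowing_absurd)
qed

lemma chart_boundary_negligible:
  "negligible {u. \<exists>i. fst (chart u) $ i = 0 \<or> snd (chart u) $ i = 0}"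
proof -
  let ?H = "\<lambda>a c. {u :: real \<times> real \<times> real \<times> real. a \<bullet> u = c}"
  have "{u. \<exists>i. fst (chart u) $ i = 0 \<or> snd (chart u) $ i = 0} \<subseteq>
    ?H (1,0,0,0) 0 \<union> ?H (0,1,0,0) 0 \<union> ?H (1,1,0,0) 1 \<union> ?H (0,0,1,0) 0 \<union> ?H (0,0,0,1) 0 \<union> ?H (0,0,1,1) 1"
  proof
    fix u :: "real \<times> real \<times> real \<times> real"
    assume "u \<in> {u. \<exists>i. fst (chart u) $ i = 0 \<or> snd (chart u) $ i = 0}"
    then obtain i where i: "fst (chart u) $ i = 0 \<or> snd (chart u) $ i = 0" by blast
    obtain a b c d where u: "u = (a, b, c, d)" by (cases u) auto
    show "u \<in> ?H (1,0,0,0) 0 \<union> ?H (0,1,0,0) 0 \<union> ?H (1,1,0,0) 1 \<union> ?H (0,0,1,0) 0 \<union> ?H (0,0,0,1) 0 \<union> ?H (0,0,1,1) 1"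
      using i exhaust_3[of i] unfolding u by (auto simp: chart_def inner_Pair)
  qed
  then show ?thesis
    by (rule negligible_subset[rotated])
      (intro negligible_Un; rule negligible_hyperplane; simp add: zero_prod_def)
qed

lemma C4_basin_null:
  assumes "\<bar>ex\<bar> < 1" "\<bar>ey\<bar> < 1" "0 < d" "d \<le> min (1 - \<bar>ex\<bar>) (1 - \<bar>ey\<bar>) / 64"
  shows "ell_null (basin ex ey C4 d)"
proof -
  have "chart -` (basin ex ey C4 d \<inter> Delta) \<subseteq> {u. \<exists>i. fst (chart u) $ i = 0 \<or> snd (chart u) $ i = 0}"
    using interior_not_in_C4_basin[OF assms] by blast
  then show ?thesis unfolding ell_null_def negligible_iff_null_sets[symmetric]
    by (rule negligible_subset[OF chart_boundary_negligible])
qed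

lemma Sigma_ratio_eq_0_if_null_basin:
  assumes "ell_null (basin ex ey A d)"
  shows "Sigma_ratio ex ey A x e d = 0"
proof -
  have "negligible (chart -` (ball x e \<inter> basin ex ey A d \<inter> Delta))"
    using assms unfolding ell_null_def negligible_iff_null_sets[symmetric]
    by (rule negligible_subset) auto
  then show ?thesis
    unfolding Sigma_ratio_def ell_def negligible_iff_null_sets by (simp add: measure_eq_0_null_sets)
qed

lemma iter_index_is_infinity:
  assumes "\<forall>\<^sub>F d in at_right 0. \<forall>e. f e d = 0"
  shows "iter_index_is f \<infinity>"
  unfolding iter_index_is_def
  by (rule exI[of _ "\<lambda>_. \<infinity>"]) (auto intro: eventually_mono[OF assms])

lemma iter_index_is_zero:
  assumes "\<forall>\<^sub>F d in at_right 0. \<forall>e. f e d = 1"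
  shows "iter_index_is f 0"
proof -
  have "\<not> (\<forall>\<^sub>F e in at_right (0::real). False)"
    using trivial_limit_at_right_real[of 0] by (simp add: trivial_limit_def)
  then show ?thesis unfolding iter_index_is_def
    by (intro exI[of _ "\<lambda>_. 0"]) (auto intro: eventually_mono[OF assms] simp: zero_ereal_def)
qed

lemma stability_index_neg_infinity_if_null_basins:
  assumes "\<forall>\<^sub>F d in at_right 0. ell_null (basin ex ey A d)"
  shows "stability_index_is ex ey A x (-\<infinity>)"
proof -
  have "\<forall>\<^sub>F d in at_right 0. \<forall>e. Sigma_ratio ex ey A x e d = 0"
    using assms by eventually_elim (simp add: Sigma_ratio_eq_0_if_null_basin)
  then have "sigma_minus_is ex ey A x \<infinity>" "sigma_plus_is ex ey A x 0"
    unfolding sigma_minus_is_def sigma_plus_is_def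
    by (auto intro!: iter_index_is_infinity iter_index_is_zero elim!: eventually_mono)
  then show ?thesis unfolding stability_index_is_def by force
qed

theorem mainTheorem5:
  fixes ex ey :: real
  assumes "-1 < ex" "ex < 1" "-1 < ey" "ey < 1"
  shows "(\<forall>x\<in>C4_connections. stability_index_is ex ey C4 x (-\<infinity>))
         \<and> completely_unstable ex ey C4"
proof -
  define \<delta> where "\<delta> = min (1 - \<bar>ex\<bar>) (1 - \<bar>ey\<bar>) / 64"
  have ex: "\<bar>ex\<bar> < 1" and ey: "\<bar>ey\<bar> < 1" using assms by auto
  then have "\<delta> > 0" unfolding \<delta>_def by simp
  have null: "ell_null (basin ex ey C4 d)" if "0 < d" "d \<le> \<delta>" for d
    using C4_basin_null[OF ex ey] that unfolding \<delta>_def by blast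
  have "\<forall>\<^sub>F d in at_right 0. ell_null (basin ex ey C4 d)"
    using eventually_at_right_real[OF \<open>\<delta> > 0\<close>] by eventually_elim (simp add: null)
  then show ?thesis
    unfolding completely_unstable_def
    using stability_index_neg_infinity_if_null_basins null[of \<delta>] \<open>\<delta> > 0\<close> by blast
qed

end
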